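(* Let $\mathbf{x}_1,\dots,\mathbf{x}_N\in\mathbb{R}^d$ be strictly linearly separable, i.e. there exists $\mathbf{w}_*\in\mathbb{R}^d$ with $\mathbf{w}_*^\top\mathbf{x}_n>0$ for all $n$. Let $\ell:\mathbb{R}\to\mathbb{R}$ be positive, differentiable, with $\beta$-Lipschitz derivative, $\ell'(u)<0$ for all $u$, $\lim_{u\to\infty}\ell(u)=\lim_{u\to\infty}\ell'(u)=0$, and $\limsup_{u\to-\infty}\ell'(u)\neq 0$. Let $\eta>0$ and let $B$ be a positive integer with $K=N/B$ an integer. For any starting point $\mathbf{w}(0)\in\mathbb{R}^d$, let $\mathbf{w}(t)$ be the iterates of stochastic gradient descent $$\mathbf{w}(t+1)=\mathbf{w}(t)-\frac{\eta}{B}\sum_{n\in\mathcal{B}(t)}\ell'\big(\mathbf{w}(t)^\top\mathbf{x}_n\big)\mathbf{x}_n,$$ where each minibatch $\mathcal{B}(t)\subset\{1,\dots,N\}$ consists of $B$ distinct indices and the minibatches are chosen according to either sampling regime (random sampling with replacement, or sampling without replacement) described in the context. Then $\|\mathbf{w}(t)\|\to\infty$ as $t\to\infty$.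
   Context: Sampling regimes. (Random sampling with replacement): at each iteration $t$ a minibatch $\mathcal{B}(t)$ of $B$ distinct indices is sampled randomly and uniformly (independently across iterations), so that each sample has identical probability of being selected. (Sampling without replacement): at each epoch the minibatches partition the data, i.e. for every $u\in\{0,1,2,\dots\}$, $\bigcup_{k=0}^{K-1}\mathcal{B}(Ku+k)=\{1,\dots,N\}$ (the order may be arbitrary, even adversarial). *)

theory Defs
  imports "HOL-Analysis.Analysis" "HOL-Probability.Probability"
begin

primrec sgd_iter ::
  "real \<Rightarrow> nat \<Rightarrow> (real \<Rightarrow> real) \<Rightarrow> (nat \<Rightarrow> real ^ 'd) \<Rightarrow> real ^ 'd
     \<Rightarrow> (nat \<Rightarrow> nat set) \<Rightarrow> nat \<Rightarrow> real ^ 'd" where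
  "sgd_iter eta B l' x w0 Bt 0 = w0"
| "sgd_iter eta B l' x w0 Bt (Suc t) =
     sgd_iter eta B l' x w0 Bt t
     - (eta / real B) *\<^sub>R (\<Sum>n\<in>Bt t. l' (sgd_iter eta B l' x w0 Bt t \<bullet> x n) *\<^sub>R x n)"

definition minibatches :: "nat \<Rightarrow> nat \<Rightarrow> nat set set" where
  "minibatches N B = {S. S \<subseteq> {1..N} \<and> card S = B}"

end

theory Submission
  imports Defs
begin

(* Fix ws with ws \<bullet> x n > 0 for all n. Every SGD step adds a nonnegative combination of
   data points, so ws \<bullet> w t is nondecreasing and controls the displacement:
   norm (w t - w 0) \<le> C * (ws \<bullet> w t - ws \<bullet> w 0). If ws \<bullet> w t stayed bounded, so would w t
   and all w t \<bullet> x n; on that compact range the continuous negative l' is bounded away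
   from 0, so ws \<bullet> w t would grow linearly after all. *)

lemma filterlim_at_top_incseq_unbounded:
  fixes g :: "nat \<Rightarrow> 'a::linorder"
  assumes "incseq g" and "\<And>Z. \<exists>t. Z \<le> g t"
  shows "filterlim g at_top sequentially"
  unfolding filterlim_at_top eventually_sequentially
proof
  fix Z
  obtain t where "Z \<le> g t" using assms(2) by blast
  then show "\<exists>t. \<forall>s\<ge>t. Z \<le> g s"
    using incseqD[OF assms(1)] order_trans by blast
qed

lemma unbounded_if_increments_ge:
  fixes g :: "nat \<Rightarrow> real"
  assumes "\<delta> > 0" and "\<And>t. g t + \<delta> \<le> g (Suc t)"
  shows "\<exists>t. Z \<le> g t"
proof -
  have linear: "g 0 + real t * \<delta> \<le> g t" for t
  proof (induction t)
    case (Suc t)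
    then show ?case using assms(2)[of t] by (simp add: algebra_simps)
  qed simp
  obtain t :: nat where "(Z - g 0) / \<delta> < t"
    using reals_Archimedean2 by blast
  then have "Z \<le> g 0 + real t * \<delta>"
    using assms(1) by (simp add: field_simps)
  then show ?thesis using linear order_trans by blast
qed

lemma compact_continuous_neg_bounded_away:
  fixes f :: "'a::topological_space \<Rightarrow> real"
  assumes "compact S" and "continuous_on S f" and "\<forall>u\<in>S. f u < 0"
  shows "\<exists>\<gamma>>0. \<forall>u\<in>S. f u \<le> - \<gamma>"
proof (cases "S = {}")
  case False
  then obtain u0 where "u0 \<in> S" "\<forall>u\<in>S. f u \<le> f u0"
    using continuous_attains_sup[OF assms(1) _ assms(2)] by blast
  then show ?thesis using assms(3) by (intro exI[of _ "- f u0"]) auto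
qed (auto intro: exI[of _ 1])

lemma inner_sum_scaleR_ge:
  fixes x :: "'i \<Rightarrow> 'a::real_inner"
  assumes "\<forall>n\<in>S. 0 \<le> c n" and "\<forall>n\<in>S. m \<le> v \<bullet> x n"
  shows "m * sum c S \<le> v \<bullet> (\<Sum>n\<in>S. c n *\<^sub>R x n)"
  unfolding inner_sum_right sum_distrib_left
proof (rule sum_mono)
  fix n assume "n \<in> S"
  then show "m * c n \<le> v \<bullet> (c n *\<^sub>R x n)"
    using assms mult_right_mono[of m "v \<bullet> x n" "c n"] by (simp add: mult.commute)
qed

lemma norm_sum_scaleR_le:
  fixes x :: "'i \<Rightarrow> 'a::real_normed_vector"
  assumes "\<forall>n\<in>S. 0 \<le> c n" and "\<forall>n\<in>S. norm (x n) \<le> X"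
  shows "norm (\<Sum>n\<in>S. c n *\<^sub>R x n) \<le> X * sum c S"
proof -
  have "norm (\<Sum>n\<in>S. c n *\<^sub>R x n) \<le> (\<Sum>n\<in>S. c n * norm (x n))"
    using norm_sum[of "\<lambda>n. c n *\<^sub>R x n" S] assms(1) by simp
  also have "\<dots> \<le> X * sum c S"
    unfolding sum_distrib_left
    using assms mult_left_mono[of "norm (x _)" X "c _"]
    by (intro sum_mono) (simp add: mult.commute)
  finally show ?thesis .
qed

lemma norm_diff_le_inner_diff:
  fixes w :: "nat \<Rightarrow> 'a::real_inner"
  assumes "\<And>t. norm (w (Suc t) - w t) \<le> C * (v \<bullet> (w (Suc t) - w t))"
  shows "norm (w t - w 0) \<le> C * (v \<bullet> (w t - w 0))"
proof (induction t)
  case (Suc t)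
  have "norm (w (Suc t) - w 0) \<le> norm (w (Suc t) - w t) + norm (w t - w 0)"
    using norm_triangle_ineq[of "w (Suc t) - w t" "w t - w 0"] by simp
  also have "\<dots> \<le> C * (v \<bullet> (w (Suc t) - w t)) + C * (v \<bullet> (w t - w 0))"
    using assms Suc.IH by (rule add_mono)
  finally show ?case by (simp add: inner_diff_right algebra_simps)
qed simp

lemma filterlim_norm_at_top_if_inner:
  fixes w :: "'b \<Rightarrow> 'a::real_inner"
  assumes "filterlim (\<lambda>t. v \<bullet> w t) at_top F"
  shows "filterlim (\<lambda>t. norm (w t)) at_top F"
proof (rule filterlim_at_top_mono)
  have pos: "0 < norm v + 1"
    by (simp add: add_nonneg_pos)
  then show "filterlim (\<lambda>t. inverse (norm v + 1) * (v \<bullet> w t)) at_top F"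
    by (intro filterlim_tendsto_pos_mult_at_top[OF tendsto_const _ assms]) simp
  have "inverse (norm v + 1) * (v \<bullet> w t) \<le> norm (w t)" for t
  proof -
    have "v \<bullet> w t \<le> (norm v + 1) * norm (w t)"
      using abs_le_D1[OF Cauchy_Schwarz_ineq2[of v "w t"]] norm_ge_zero[of "w t"]
      unfolding distrib_right by linarith
    then have "inverse (norm v + 1) * (v \<bullet> w t)
        \<le> inverse (norm v + 1) * ((norm v + 1) * norm (w t))"
      using pos by (simp add: mult_left_mono)
    then show ?thesis
      using pos by (simp add: mult.assoc[symmetric])
  qed
  then show "\<forall>\<^sub>F t in F. inverse (norm v + 1) * (v \<bullet> w t) \<le> norm (w t)"
    by (intro always_eventually allI)
qed

lemma AE_stream_nth_in_set_pmf:
  "AE \<omega> in stream_space (measure_pmf p). \<forall>t. \<omega> !! t \<in> set_pmf p"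
proof -
  have "AE \<omega> in stream_space (measure_pmf p). stream_all (\<lambda>S. S \<in> set_pmf p) \<omega>"
    by (rule prob_space.AE_stream_all[OF prob_space_measure_pmf])
      (simp_all add: measurable_def AE_measure_pmf)
  then show ?thesis by eventually_elim (simp add: stream_all_def snth_in)
qed

lemma conic_steps_drift:
  fixes w :: "nat \<Rightarrow> 'a::real_inner" and x :: "'i \<Rightarrow> 'a"
  assumes step: "\<And>t. w (Suc t) - w t = (\<Sum>n\<in>S t. c t n *\<^sub>R x n)"
    and S: "\<And>t. S t \<subseteq> I" and c_nonneg: "\<And>t n. n \<in> I \<Longrightarrow> 0 \<le> c t n"
    and m: "0 < m" "\<forall>n\<in>I. m \<le> v \<bullet> x n"
    and X: "0 \<le> X" "\<forall>n\<in>I. norm (x n) \<le> X"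
  shows "m * sum (c t) (S t) \<le> v \<bullet> w (Suc t) - v \<bullet> w t"
    and "norm (w t - w 0) \<le> X / m * (v \<bullet> w t - v \<bullet> w 0)"
proof -
  have inner_step: "m * sum (c t) (S t) \<le> v \<bullet> (w (Suc t) - w t)" for t
    unfolding step using subsetD[OF S[of t]] c_nonneg m by (intro inner_sum_scaleR_ge) auto
  then show "m * sum (c t) (S t) \<le> v \<bullet> w (Suc t) - v \<bullet> w t"
    by (simp add: inner_diff_right)
  have "norm (w (Suc t) - w t) \<le> X / m * (v \<bullet> (w (Suc t) - w t))" for t
  proof -
    have "norm (w (Suc t) - w t) \<le> X * sum (c t) (S t)"
      unfolding step using subsetD[OF S[of t]] c_nonneg X by (intro norm_sum_scaleR_le) auto
    also have "\<dots> = X / m * (m * sum (c t) (S t))"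
      using m by simp
    also have "\<dots> \<le> X / m * (v \<bullet> (w (Suc t) - w t))"
      using inner_step[of t] m X by (intro mult_left_mono) auto
    finally show ?thesis .
  qed
  then show "norm (w t - w 0) \<le> X / m * (v \<bullet> w t - v \<bullet> w 0)"
    using norm_diff_le_inner_diff[of w "X / m" v] by (simp add: inner_diff_right)
qed

lemma conic_steps_inner_unbounded:
  fixes w :: "nat \<Rightarrow> 'a::real_inner" and x :: "'i \<Rightarrow> 'a"
  assumes "finite I"
    and step: "\<And>t. w (Suc t) - w t = (\<Sum>n\<in>S t. c t n *\<^sub>R x n)"
    and S: "\<And>t. S t \<subseteq> I" "\<And>t. S t \<noteq> {}"
    and c_nonneg: "\<And>t n. n \<in> I \<Longrightarrow> 0 \<le> c t n"
    and c_away: "\<And>R. \<exists>\<gamma>>0. \<forall>t. \<forall>n\<in>I. \<bar>w t \<bullet> x n\<bar> \<le> R \<longrightarrow> \<gamma> \<le> c t n"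
    and m: "0 < m" "\<forall>n\<in>I. m \<le> v \<bullet> x n"
    and X: "0 \<le> X" "\<forall>n\<in>I. norm (x n) \<le> X"
  shows "\<exists>t. Z \<le> v \<bullet> w t"
proof (rule ccontr)
  assume below: "\<nexists>t. Z \<le> v \<bullet> w t"
  note increment = conic_steps_drift(1)[where S = S and c = c, OF step S(1) c_nonneg m X]
  note drift = conic_steps_drift(2)[where S = S and c = c, OF step S(1) c_nonneg m X]
  define \<rho> where "\<rho> = norm (w 0) + X / m * (Z - v \<bullet> w 0)"
  have "\<bar>w t \<bullet> x n\<bar> \<le> \<rho> * X" if "n \<in> I" for t n
  proof -
    have "X / m * (v \<bullet> w t - v \<bullet> w 0) \<le> X / m * (Z - v \<bullet> w 0)"
      using below m X by (intro mult_left_mono) (auto simp: not_le less_imp_le)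
    then have "norm (w t) \<le> \<rho>"
      using norm_triangle_sub[of "w t" "w 0"] drift[of t] unfolding \<rho>_def by linarith
    have "\<bar>w t \<bullet> x n\<bar> \<le> norm (w t) * norm (x n)"
      by (rule Cauchy_Schwarz_ineq2)
    also have "\<dots> \<le> \<rho> * X"
      using \<open>norm (w t) \<le> \<rho>\<close> X that
      by (intro mult_mono) (auto intro: order_trans[OF norm_ge_zero])
    finally show ?thesis .
  qed
  moreover obtain \<gamma> where "0 < \<gamma>"
    and \<gamma>: "\<forall>t. \<forall>n\<in>I. \<bar>w t \<bullet> x n\<bar> \<le> \<rho> * X \<longrightarrow> \<gamma> \<le> c t n"
    using c_away by blast
  ultimately have c_ge: "n \<in> I \<Longrightarrow> \<gamma> \<le> c t n" for t n
    by blast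
  have "v \<bullet> w t + m * \<gamma> \<le> v \<bullet> w (Suc t)" for t
  proof -
    obtain n where n: "n \<in> S t" using S(2) by blast
    have "\<gamma> \<le> c t n"
      using n S(1) c_ge by blast
    also have "c t n \<le> sum (c t) (S t)"
      using n c_nonneg S(1) finite_subset[OF _ \<open>finite I\<close>] by (intro member_le_sum) auto
    finally have "m * \<gamma> \<le> m * sum (c t) (S t)"
      using m by (intro mult_left_mono) auto
    then show ?thesis
      using increment[of t] by linarith
  qed
  then show False
    using unbounded_if_increments_ge[of "m * \<gamma>" "\<lambda>t. v \<bullet> w t" Z] below m \<open>0 < \<gamma>\<close>
    by simp
qed

lemma conic_steps_inner_at_top:
  fixes w :: "nat \<Rightarrow> 'a::real_inner" and x :: "'i \<Rightarrow> 'a"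
  assumes "finite I" and sep: "\<forall>n\<in>I. 0 < v \<bullet> x n"
    and step: "\<And>t. w (Suc t) - w t = (\<Sum>n\<in>S t. c t n *\<^sub>R x n)"
    and S: "\<And>t. S t \<subseteq> I" "\<And>t. S t \<noteq> {}"
    and c_pos: "\<And>t n. n \<in> I \<Longrightarrow> 0 < c t n"
    and c_away: "\<And>R. \<exists>\<gamma>>0. \<forall>t. \<forall>n\<in>I. \<bar>w t \<bullet> x n\<bar> \<le> R \<longrightarrow> \<gamma> \<le> c t n"
  shows "filterlim (\<lambda>t. v \<bullet> w t) at_top sequentially"
proof (rule filterlim_at_top_incseq_unbounded)
  obtain m where m: "0 < m" "\<forall>n\<in>I. m \<le> v \<bullet> x n"
    using \<open>finite I\<close> sep
    by (intro that[of "Min (insert 1 ((\<lambda>n. v \<bullet> x n) ` I))"]) (auto simp: Min_gr_iff)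
  obtain X where X: "0 \<le> X" "\<forall>n\<in>I. norm (x n) \<le> X"
    using \<open>finite I\<close> by (intro that[of "Max (insert 0 ((\<lambda>n. norm (x n)) ` I))"]) auto
  have c_nonneg: "n \<in> I \<Longrightarrow> 0 \<le> c t n" for t n
    using c_pos less_imp_le by blast
  show "incseq (\<lambda>t. v \<bullet> w t)"
  proof (rule incseq_SucI)
    fix t
    have "0 \<le> m * sum (c t) (S t)"
      using m c_nonneg subsetD[OF S(1)] by (intro mult_nonneg_nonneg sum_nonneg) auto
    then show "v \<bullet> w t \<le> v \<bullet> w (Suc t)"
      using conic_steps_drift(1)[where S = S and c = c, OF step S(1) c_nonneg m X, of t]
      by linarith
  qed
  show "\<exists>t. Z \<le> v \<bullet> w t" for Z
    by (rule conic_steps_inner_unbounded[OF \<open>finite I\<close> step S c_nonneg c_away m X])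
qed

lemma sgd_iter_norm_at_top:
  fixes x :: "nat \<Rightarrow> real ^ 'd" and ws :: "real ^ 'd" and l' :: "real \<Rightarrow> real"
  assumes "finite I" and sep: "\<forall>n\<in>I. 0 < ws \<bullet> x n"
    and l'_cont: "continuous_on UNIV l'" and l'_neg: "\<forall>u. l' u < 0"
    and "0 < eta" and "0 < B"
    and batches: "\<forall>t. Bt t \<subseteq> I \<and> Bt t \<noteq> {}"
  shows "filterlim (\<lambda>t. norm (sgd_iter eta B l' x w0 Bt t)) at_top sequentially"
proof (rule filterlim_norm_at_top_if_inner)
  define w where "w = sgd_iter eta B l' x w0 Bt"
  define c where "c t n = eta / B * - l' (w t \<bullet> x n)" for t n
  have "0 < eta / B"
    using \<open>0 < eta\<close> \<open>0 < B\<close> by simp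
  have "w (Suc t) - w t = (\<Sum>n\<in>Bt t. c t n *\<^sub>R x n)" for t
    by (simp add: w_def c_def scaleR_sum_right sum_negf)
  moreover have "0 < c t n" for t n
    unfolding c_def using \<open>0 < eta / B\<close> l'_neg by (intro mult_pos_pos) auto
  moreover have "\<exists>\<gamma>>0. \<forall>t. \<forall>n\<in>I. \<bar>w t \<bullet> x n\<bar> \<le> R \<longrightarrow> \<gamma> \<le> c t n" for R
  proof -
    obtain \<gamma> where "0 < \<gamma>" and \<gamma>: "\<forall>u\<in>{-R..R}. l' u \<le> - \<gamma>"
      using compact_continuous_neg_bounded_away[OF compact_Icc
          continuous_on_subset[OF l'_cont subset_UNIV]] l'_neg by blast
    have "eta / B * \<gamma> \<le> c t n" if "\<bar>w t \<bullet> x n\<bar> \<le> R" for t n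
    proof -
      have "w t \<bullet> x n \<in> {-R..R}"
        using that by (simp add: abs_le_iff)
      with \<gamma> have "\<gamma> \<le> - l' (w t \<bullet> x n)"
        by fastforce
      then show ?thesis
        unfolding c_def using \<open>0 < eta / B\<close> by (intro mult_left_mono) auto
    qed
    then show ?thesis
      using mult_pos_pos[OF \<open>0 < eta / B\<close> \<open>0 < \<gamma>\<close>] by blast
  qed
  ultimately show "filterlim (\<lambda>t. ws \<bullet> w t) at_top sequentially"
    using batches by (intro conic_steps_inner_at_top[OF \<open>finite I\<close> sep]) auto
qed

lemma continuous_on_if_lipschitz_bound:
  fixes f :: "real \<Rightarrow> real"
  assumes "\<forall>u v. \<bar>f u - f v\<bar> \<le> L * \<bar>u - v\<bar>"
  shows "continuous_on UNIV f"
proof (rule lipschitz_on_continuous_on)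
  show "\<bar>L\<bar>-lipschitz_on UNIV f"
  proof (rule lipschitz_onI)
    fix u v :: real
    have "\<bar>f u - f v\<bar> \<le> L * \<bar>u - v\<bar>"
      using assms by blast
    also have "\<dots> \<le> \<bar>L\<bar> * \<bar>u - v\<bar>"
      by (intro mult_right_mono) auto
    finally show "dist (f u) (f v) \<le> \<bar>L\<bar> * dist u v"
      by (simp add: dist_real_def)
  qed simp
qed

lemma minibatch_subset_nonempty:
  assumes "S \<in> minibatches N B" and "0 < B"
  shows "S \<subseteq> {1..N} \<and> S \<noteq> {}"
  using assms by (auto simp: minibatches_def)

lemma set_pmf_of_minibatches:
  assumes "B \<le> N"
  shows "set_pmf (pmf_of_set (minibatches N B)) = minibatches N B"
proof (rule set_pmf_of_set)
  show "minibatches N B \<noteq> {}"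
    using assms by (auto simp: minibatches_def intro!: exI[of _ "{1..B}"])
  show "finite (minibatches N B)"
    unfolding minibatches_def by (rule finite_subset[of _ "Pow {1..N}"]) auto
qed

theorem lemma1:
  fixes x :: "nat \<Rightarrow> real ^ 'd"
    and N B K :: nat
    and l l' :: "real \<Rightarrow> real"
    and beta eta :: real
  assumes N_pos: "0 < N"
    and sep: "\<exists>w_star :: real ^ 'd. \<forall>n\<in>{1..N}. w_star \<bullet> x n > 0"
    and l_pos: "\<forall>u. l u > 0"
    and l_deriv: "\<forall>u. (l has_real_derivative l' u) (at u)"
    and l'_lip: "\<forall>u v. \<bar>l' u - l' v\<bar> \<le> beta * \<bar>u - v\<bar>"
    and l'_neg: "\<forall>u. l' u < 0"
    and l_lim: "(l \<longlongrightarrow> 0) at_top"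
    and l'_lim: "(l' \<longlongrightarrow> 0) at_top"
    and l'_limsup: "Limsup at_bot (\<lambda>u. ereal (l' u)) \<noteq> 0"
    and eta_pos: "eta > 0"
    and B_pos: "0 < B"
    and K_def: "N = K * B"
  shows
    \<comment> \<open>sampling without replacement: every (even adversarial) epoch-partitioning order\<close>
    "(\<forall>(w0 :: real ^ 'd) (Bt :: nat \<Rightarrow> nat set).
        (\<forall>t. Bt t \<in> minibatches N B) \<longrightarrow>
        (\<forall>u. (\<Union>k<K. Bt (K * u + k)) = {1..N}) \<longrightarrow>
        filterlim (\<lambda>t. norm (sgd_iter eta B l' x w0 Bt t)) at_top sequentially)
     \<and>
    \<comment> \<open>random sampling with replacement: i.i.d. uniform minibatches, almost surely\<close>
     (\<forall>(w0 :: real ^ 'd).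
        AE \<omega> in stream_space (measure_pmf (pmf_of_set (minibatches N B))).
          filterlim (\<lambda>t. norm (sgd_iter eta B l' x w0 (\<lambda>t. \<omega> !! t) t)) at_top sequentially)"
proof -
  obtain ws :: "real ^ 'd" where ws: "\<forall>n\<in>{1..N}. 0 < ws \<bullet> x n"
    using sep by blast
  have diverges: "filterlim (\<lambda>t. norm (sgd_iter eta B l' x w0 Bt t)) at_top sequentially"
    if "\<forall>t. Bt t \<in> minibatches N B" for w0 Bt
    using that minibatch_subset_nonempty[OF _ B_pos]
    by (intro sgd_iter_norm_at_top[OF _ ws continuous_on_if_lipschitz_bound[OF l'_lip]
          l'_neg eta_pos B_pos]) auto
  have "B \<le> N"
    using N_pos K_def by (cases K) auto
  then show ?thesis
    using diverges AE_stream_nth_in_set_pmf[of "pmf_of_set (minibatches N B)"]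
    by (auto simp: set_pmf_of_minibatches elim!: eventually_mono)
qed

end
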